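(* Let $\Lambda$ be a $d$-dimensional Euclidean lattice of minimum $1$, and let $\mathcal V=-\mathcal V\subset\Lambda\setminus\{0\}$ be a finite set of nonzero elements of squared Euclidean length at most $2$ whose convex hull $P$ is $d$-dimensional. Then (i) the interior of $P$ meets $\Lambda$ only in $\{0\}$; (ii) if moreover every element of $\mathcal V$ has squared Euclidean length strictly smaller than $2$, then $P\cap\Lambda=\mathcal V\cup\{0\}$ and $\mathcal V$ is the set of vertices of $P$.
   Context: The minimum of a lattice is the smallest squared Euclidean length of its nonzero elements. *)

theory Defs
  imports "HOL-Analysis.Analysis"
begin

definition euclidean_lattice :: "'a::euclidean_space set \<Rightarrow> bool" where
  "euclidean_lattice L \<longleftrightarrow>
     (\<exists>B. independent B \<and> span B = UNIV \<and>
          L = {x. \<exists>c. (\<forall>v\<in>B. c v \<in> \<int>) \<and> x = (\<Sum>v\<in>B. c v *\<^sub>R v)})"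

definition lattice_minimum :: "'a::euclidean_space set \<Rightarrow> real" where
  "lattice_minimum L = (INF x \<in> L - {0}. (norm x)\<^sup>2)"

end

theory Submission
  imports Defs
begin

text \<open>If a nonzero lattice vector x lies in the convex hull of V, the linear form
  \<open>\<langle>x, -\<rangle>\<close> is maximised at some vertex v, so \<open>\<langle>x, v\<rangle> \<ge> |x|\<^sup>2\<close>, strictly if x is an interior
  point. Then \<open>|x - v|\<^sup>2 = |v|\<^sup>2 - |x|\<^sup>2 - 2(\<langle>x, v\<rangle> - |x|\<^sup>2) \<le> |v|\<^sup>2 - 1\<close>, so the lattice vector
  x - v is shorter than the minimum, hence zero, when \<open>|v|\<^sup>2 < 2\<close>, or when \<open>|v|\<^sup>2 \<le> 2\<close> and the
  inequality is strict. Thus x = v, which in the strict case contradicts \<open>\<langle>x, x\<rangle> < \<langle>x, v\<rangle>\<close>.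
  Central symmetry and full dimension put 0 in the interior.\<close>

lemma convex_hull_inner_le_member:
  fixes V :: "'a::real_inner set"
  assumes "x \<in> convex hull V"
  shows "\<exists>v\<in>V. inner y x \<le> inner y v"
proof (rule ccontr)
  assume "\<not> ?thesis"
  then have "V \<subseteq> {z. inner y z < inner y x}" by auto
  then have "convex hull V \<subseteq> {z. inner y z < inner y x}"
    by (simp add: convex_halfspace_lt hull_minimal)
  with assms show False by auto
qed

lemma interior_convex_hull_inner_less_member:
  fixes V :: "'a::euclidean_space set"
  assumes "x \<in> interior (convex hull V)" and "y \<noteq> 0"
  shows "\<exists>v\<in>V. inner y x < inner y v"
proof -
  obtain e where "e > 0" and e: "ball x e \<subseteq> convex hull V"
    using assms(1) by (meson mem_interior)
  define t where "t = e / (2 * norm y)"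
  have "t > 0" using \<open>e > 0\<close> assms(2) by (simp add: t_def)
  have "dist x (x + t *\<^sub>R y) < e"
    using \<open>e > 0\<close> \<open>t > 0\<close> assms(2) by (simp add: dist_norm t_def)
  then obtain v where "v \<in> V" and v: "inner y (x + t *\<^sub>R y) \<le> inner y v"
    using e convex_hull_inner_le_member by (metis mem_ball subsetD)
  have "inner y x < inner y (x + t *\<^sub>R y)"
    using \<open>t > 0\<close> assms(2) by (simp add: inner_add_right)
  with v \<open>v \<in> V\<close> show ?thesis by (meson order_less_le_trans)
qed

lemma zero_in_interior_symmetric_convex:
  fixes S :: "'a::euclidean_space set"
  assumes "convex S" and "uminus ` S = S" and "aff_dim S = int DIM('a)"
  shows "0 \<in> interior S"
proof -
  have "S \<noteq> {}"
  proof
    assume "S = {}"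
    with assms(3) show False by simp
  qed
  then obtain y where y: "y \<in> interior S"
    using interior_rel_interior[OF assms(3)] rel_interior_eq_empty[OF assms(1)] by blast
  then have "-y \<in> interior S"
    using interior_negations[of S] assms(2) by (metis image_eqI)
  then have "(1/2::real) *\<^sub>R y + (1/2::real) *\<^sub>R (-y) \<in> interior S"
    by (rule convexD[OF convex_interior[OF assms(1)] y]) auto
  then show ?thesis by simp
qed

lemma euclidean_lattice_zero:
  assumes "euclidean_lattice L"
  shows "0 \<in> L"
  using assms unfolding euclidean_lattice_def by (auto intro!: exI[of _ "\<lambda>_. 0"])

lemma euclidean_lattice_diff:
  assumes "euclidean_lattice L" and "x \<in> L" and "y \<in> L"
  shows "x - y \<in> L"
proof -
  obtain B where L: "L = {x. \<exists>c. (\<forall>v\<in>B. c v \<in> \<int>) \<and> x = (\<Sum>v\<in>B. c v *\<^sub>R v)}"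
    using assms(1) unfolding euclidean_lattice_def by blast
  obtain c d where c: "\<forall>v\<in>B. c v \<in> \<int>" "x = (\<Sum>v\<in>B. c v *\<^sub>R v)"
    and d: "\<forall>v\<in>B. d v \<in> \<int>" "y = (\<Sum>v\<in>B. d v *\<^sub>R v)"
    using assms(2,3) L by auto
  have "x - y = (\<Sum>v\<in>B. (c v - d v) *\<^sub>R v)"
    using c d by (simp add: sum_subtractf scaleR_diff_left)
  with c d show ?thesis
    unfolding L by (auto intro!: exI[of _ "\<lambda>v. c v - d v"])
qed

lemma lattice_minimum_le:
  assumes "z \<in> L" and "z \<noteq> 0"
  shows "lattice_minimum L \<le> (norm z)\<^sup>2"
  unfolding lattice_minimum_def
  by (rule cInf_lower) (use assms in \<open>auto intro: bdd_belowI[of _ 0]\<close>)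

lemma lattice_eq_if_norm_diff_less_minimum:
  assumes "euclidean_lattice L" and "x \<in> L" and "v \<in> L"
    and "(norm (x - v))\<^sup>2 < lattice_minimum L"
  shows "x = v"
  using lattice_minimum_le[OF euclidean_lattice_diff[OF assms(1-3)]] assms(4) by force

lemma norm_diff_power2_eq:
  fixes x v :: "'a::real_inner"
  shows "(norm (x - v))\<^sup>2 = (norm v)\<^sup>2 - (norm x)\<^sup>2 - 2 * (inner x v - inner x x)"
  by (simp add: power2_norm_eq_inner inner_diff_left inner_diff_right inner_commute)

lemma lattice_eq_if_inner_ge:
  assumes "euclidean_lattice L" and "x \<in> L" and "x \<noteq> 0" and "v \<in> L"
    and "(norm v)\<^sup>2 < 2 * lattice_minimum L" and "inner x x \<le> inner x v"
  shows "x = v"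
proof (rule lattice_eq_if_norm_diff_less_minimum[OF assms(1,2,4)])
  show "(norm (x - v))\<^sup>2 < lattice_minimum L"
    using norm_diff_power2_eq[of x v] lattice_minimum_le[OF assms(2,3)] power2_norm_eq_inner[of x]
      assms(5,6)
    by argo
qed

lemma lattice_not_inner_less:
  assumes "euclidean_lattice L" and "x \<in> L" and "x \<noteq> 0" and "v \<in> L"
    and "(norm v)\<^sup>2 \<le> 2 * lattice_minimum L"
  shows "\<not> inner x x < inner x v"
proof
  assume less: "inner x x < inner x v"
  have "(norm (x - v))\<^sup>2 < lattice_minimum L"
    using norm_diff_power2_eq[of x v] lattice_minimum_le[OF assms(2,3)] power2_norm_eq_inner[of x]
      assms(5) less
    by argo
  with lattice_eq_if_norm_diff_less_minimum[OF assms(1,2,4)] less show False by simp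
qed

lemma interior_convex_hull_lattice_points:
  assumes "euclidean_lattice L" and "V \<subseteq> L"
    and "\<forall>v\<in>V. (norm v)\<^sup>2 \<le> 2 * lattice_minimum L"
  shows "interior (convex hull V) \<inter> L \<subseteq> {0}"
proof
  fix x assume x: "x \<in> interior (convex hull V) \<inter> L"
  show "x \<in> {0}"
  proof (rule ccontr)
    assume "x \<notin> {0}"
    then obtain v where "v \<in> V" "inner x x < inner x v"
      using interior_convex_hull_inner_less_member[of x V x] x by auto
    with lattice_not_inner_less[OF assms(1)] x \<open>x \<notin> {0}\<close> assms(2,3) show False by blast
  qed
qed

lemma convex_hull_lattice_point_mem:
  assumes "euclidean_lattice L" and "V \<subseteq> L"
    and "\<forall>v\<in>V. (norm v)\<^sup>2 < 2 * lattice_minimum L"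
    and "x \<in> convex hull V" and "x \<in> L" and "x \<noteq> 0"
  shows "x \<in> V"
proof -
  obtain v where "v \<in> V" "inner x x \<le> inner x v"
    using convex_hull_inner_le_member[OF assms(4)] by blast
  with lattice_eq_if_inner_ge[OF assms(1,5,6)] assms(2,3) show ?thesis by auto
qed

lemma convex_hull_inter_lattice_eq:
  assumes "euclidean_lattice L" and "V \<subseteq> L"
    and "\<forall>v\<in>V. (norm v)\<^sup>2 < 2 * lattice_minimum L" and "0 \<in> convex hull V"
  shows "convex hull V \<inter> L = V \<union> {0}"
proof
  show "convex hull V \<inter> L \<subseteq> V \<union> {0}"
    using convex_hull_lattice_point_mem[OF assms(1-3)] by blast
  show "V \<union> {0} \<subseteq> convex hull V \<inter> L"
    using hull_subset[of V convex] assms(2,4) euclidean_lattice_zero[OF assms(1)] by blast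
qed

lemma extreme_points_convex_hull_lattice:
  assumes "euclidean_lattice L" and "finite V" and "V \<subseteq> L - {0}"
    and "\<forall>v\<in>V. (norm v)\<^sup>2 < 2 * lattice_minimum L"
  shows "{x. x extreme_point_of (convex hull V)} = V"
proof -
  have "a \<notin> convex hull (V - {a})" if "a \<in> V" for a
    using convex_hull_lattice_point_mem[OF assms(1), of "V - {a}" a] that assms(3,4) by blast
  then show ?thesis
    using extreme_point_of_convex_hull_convex_independent[OF finite_imp_compact[OF assms(2)]]
    by blast
qed

theorem proposition11p3:
  fixes L :: "'a::euclidean_space set" and V :: "'a set"
  assumes "euclidean_lattice L"
    and "lattice_minimum L = 1"
    and "finite V"
    and "uminus ` V = V"
    and "V \<subseteq> L - {0}"
    and "\<forall>v\<in>V. (norm v)\<^sup>2 \<le> 2"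
    and "aff_dim (convex hull V) = int DIM('a)"
  shows "interior (convex hull V) \<inter> L = {0}
    \<and> ((\<forall>v\<in>V. (norm v)\<^sup>2 < 2) \<longrightarrow>
         convex hull V \<inter> L = V \<union> {0} \<and> {x. x extreme_point_of (convex hull V)} = V)"
proof -
  have "V \<subseteq> L" using assms(5) by blast
  have "uminus ` (convex hull V) = convex hull V"
    using convex_hull_linear_image[of uminus V] assms(4) by (simp add: linear_uminus)
  then have zero: "0 \<in> interior (convex hull V)"
    using zero_in_interior_symmetric_convex[OF convex_convex_hull _ assms(7)] by blast
  have "\<forall>v\<in>V. (norm v)\<^sup>2 \<le> 2 * lattice_minimum L" using assms(2,6) by simp
  then have "interior (convex hull V) \<inter> L = {0}"
    using interior_convex_hull_lattice_points[OF assms(1) \<open>V \<subseteq> L\<close>]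
      zero euclidean_lattice_zero[OF assms(1)] by blast
  moreover have "convex hull V \<inter> L = V \<union> {0} \<and> {x. x extreme_point_of (convex hull V)} = V"
    if "\<forall>v\<in>V. (norm v)\<^sup>2 < 2"
  proof -
    have short: "\<forall>v\<in>V. (norm v)\<^sup>2 < 2 * lattice_minimum L" using that assms(2) by simp
    show ?thesis
      using convex_hull_inter_lattice_eq[OF assms(1) \<open>V \<subseteq> L\<close> short]
        extreme_points_convex_hull_lattice[OF assms(1,3,5) short]
        zero interior_subset by blast
  qed
  ultimately show ?thesis by blast
qed

end
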